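(* Let $G(\pi_i,\pi_i')=\frac12\|\pi_i-\pi_i'\|^2$ and $\mu>0$. Assume $\sqrt{\sum_{i=1}^N\|\nabla_{\pi_i}v_i(\pi)\|^2}\le\zeta$ for all $\pi\in\mathcal X$. Then for any $\sigma,\sigma'\in\mathcal X$, $$\|\pi^{\mu,\sigma}-\sigma\|^2\le\|\sigma-\sigma'\|^2+\frac{2\zeta}{\mu}\|\pi^{\mu,\sigma'}-\sigma\|.$$ (In the paper this is applied with $\sigma=\sigma^k$, $\sigma'=\sigma^{k-1}$.)
   Context: Game. Let $N\ge1$. For each $i\in[N]$, $\mathcal X_i\subseteq\mathbb R^{d_i}$ is a nonempty compact convex set, and $\mathcal X=\prod_i\mathcal X_i$. Each $v_i:\mathcal X\to\mathbb R$ is differentiable, with block gradient $\nabla_{\pi_i}v_i$. The norm is Euclidean, with $\|\pi\|^2=\sum_i\|\pi_i\|^2$. The game is monotone: $\sum_i\langle\nabla_{\pi_i}v_i(\pi)-\nabla_{\pi_i}v_i(\pi'),\pi_i-\pi_i'\rangle\le0$ for all $\pi,\pi'$. Perturbed equilibrium. For $\mu>0$ and $\sigma\in\mathcal X$, $\pi^{\mu,\sigma}$ is the (unique) profile with $\pi_i^{\mu,\sigma}\in\arg\max_{\pi_i\in\mathcal X_i}\{v_i(\pi_i,\pi^{\mu,\sigma}_{-i})-\mu G(\pi_i,\sigma_i)\}$ for all $i$. *)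

theory Defs
  imports "HOL-Analysis.Analysis"
begin

text \<open>A strategy profile is a vector in real^'c; every coordinate c belongs to
  the player owner c :: 'p.  The block of player i is the projection onto the
  coordinates owned by i (other coordinates set to 0).  This realises
  R^{d_1} x ... x R^{d_N} with the Euclidean norm.\<close>

definition block :: "('c::finite \<Rightarrow> 'p) \<Rightarrow> 'p \<Rightarrow> real^'c \<Rightarrow> real^'c" where
  "block owner i x = (\<chi> c. if owner c = i then x $ c else 0)"

definition block_space :: "('c::finite \<Rightarrow> 'p) \<Rightarrow> 'p \<Rightarrow> (real^'c) set" where
  "block_space owner i = {x. \<forall>c. owner c \<noteq> i \<longrightarrow> x $ c = 0}"

definition upd_block :: "('c::finite \<Rightarrow> 'p) \<Rightarrow> 'p \<Rightarrow> real^'c \<Rightarrow> real^'c \<Rightarrow> real^'c" where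
  "upd_block owner i q x = q - block owner i q + x"

definition prod_set :: "('c::finite \<Rightarrow> 'p) \<Rightarrow> ('p \<Rightarrow> (real^'c) set) \<Rightarrow> (real^'c) set" where
  "prod_set owner Xs = {q. \<forall>i. block owner i q \<in> Xs i}"

definition Gsq :: "real^'c::finite \<Rightarrow> real^'c \<Rightarrow> real" where
  "Gsq x y = (1/2) * (norm (x - y))^2"

definition perturbed_eq ::
  "('c::finite \<Rightarrow> 'p) \<Rightarrow> ('p \<Rightarrow> (real^'c) set) \<Rightarrow> ('p \<Rightarrow> real^'c \<Rightarrow> real)
    \<Rightarrow> real \<Rightarrow> real^'c \<Rightarrow> real^'c \<Rightarrow> bool" where
  "perturbed_eq owner Xs v mu sg q \<longleftrightarrow>
     q \<in> prod_set owner Xs \<and>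
     (\<forall>i. \<forall>x\<in>Xs i.
        v i (upd_block owner i q x) - mu * Gsq x (block owner i sg)
          \<le> v i q - mu * Gsq (block owner i q) (block owner i sg))"

end

theory Submission imports Defs begin

text \<open>The first-order conditions of a perturbed equilibrium \<open>\<pi>\<close> with anchor \<open>\<sigma>\<close> form the
  variational inequality \<open>V(\<pi>) \<bullet> (y - \<pi>) \<le> \<mu> (\<pi> - \<sigma>) \<bullet> (y - \<pi>)\<close> for the pseudo-gradient \<open>V\<close>.
  Testing the inequalities of \<open>\<pi> = \<pi>\<^sup>\<mu>\<^sup>,\<^sup>\<sigma>\<close> and \<open>\<pi>' = \<pi>\<^sup>\<mu>\<^sup>,\<^sup>\<sigma>\<^sup>'\<close> at each other and using monotonicity
  of \<open>V\<close> gives \<open>(a - b - e) \<bullet> (a - b) \<le> 0\<close> for \<open>a = \<pi> - \<sigma>\<close>, \<open>b = \<pi>' - \<sigma>\<close>, \<open>e = \<sigma> - \<sigma>'\<close>,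
  which rearranges to \<open>\<parallel>a\<parallel>\<^sup>2 \<le> \<parallel>e\<parallel>\<^sup>2 + 2 (b + e) \<bullet> b\<close>.  Testing the inequality of \<open>\<pi>'\<close> at \<open>\<sigma>\<close>
  bounds \<open>\<mu> (b + e) \<bullet> b\<close> by \<open>V(\<pi>') \<bullet> b \<le> \<zeta> \<parallel>b\<parallel>\<close>.\<close>

lemma DERIV_nonpos_at_left_endpoint_max:
  fixes h :: "real \<Rightarrow> real"
  assumes "(h has_real_derivative D) (at 0 within {0..1})"
    and "\<And>t. t \<in> {0..1} \<Longrightarrow> h t \<le> h 0"
  shows "D \<le> 0"
proof -
  have "((\<lambda>t. (h t - h 0) / t) \<longlongrightarrow> D) (at 0 within {0..1})"
    using assms(1) by (simp add: has_field_derivative_iff)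
  moreover have "\<forall>\<^sub>F t in at 0 within {0..1}. (h t - h 0) / t \<le> 0"
    unfolding eventually_at_filter
    by (rule always_eventually) (auto intro!: divide_nonpos_pos assms(2))
  moreover have "at (0::real) within {0..1} \<noteq> bot"
    by (simp add: at_within_Icc_at_right)
  ultimately show ?thesis
    by (rule tendsto_upperbound)
qed

lemma has_derivative_max_on_convex:
  fixes f :: "'a::real_normed_vector \<Rightarrow> real"
  assumes "convex S" and "x \<in> S" and "y \<in> S"
    and f': "(f has_derivative f') (at x within S)"
    and max: "\<And>z. z \<in> S \<Longrightarrow> f z \<le> f x"
  shows "f' (y - x) \<le> 0"
proof -
  define \<gamma> where "\<gamma> t = x + t *\<^sub>R (y - x)" for t
  have segment: "\<gamma> t \<in> S" if "t \<in> {0..1}" for t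
  proof -
    have "\<gamma> t = (1 - t) *\<^sub>R x + t *\<^sub>R y"
      by (simp add: \<gamma>_def algebra_simps)
    then show ?thesis
      using that assms(1-3) by (auto intro: convexD)
  qed
  have "(\<gamma> has_derivative (\<lambda>t. t *\<^sub>R (y - x))) (at 0 within {0..1})"
    unfolding \<gamma>_def by (auto intro!: derivative_eq_intros)
  moreover have "(f has_derivative f') (at (\<gamma> 0) within \<gamma> ` {0..1})"
    using f' segment by (auto simp: \<gamma>_def intro: has_derivative_subset)
  ultimately have "((\<lambda>t. f (\<gamma> t)) has_derivative (\<lambda>t. f' (t *\<^sub>R (y - x)))) (at 0 within {0..1})"
    by (rule has_derivative_in_compose)
  moreover have "(\<lambda>t. f' (t *\<^sub>R (y - x))) = (*) (f' (y - x))"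
    using linear_scale[OF has_derivative_linear[OF f']] by (simp add: fun_eq_iff mult.commute)
  ultimately have "((\<lambda>t. f (\<gamma> t)) has_real_derivative f' (y - x)) (at 0 within {0..1})"
    by (simp add: has_field_derivative_def)
  then show ?thesis
    by (rule DERIV_nonpos_at_left_endpoint_max) (use max segment in \<open>simp add: \<gamma>_def\<close>)
qed

lemma perturbed_vi_distance_bound:
  fixes F :: "'a::real_inner \<Rightarrow> 'a"
  assumes mono: "(F p - F p') \<bullet> (p - p') \<le> 0"
    and vi_p: "F p \<bullet> (p' - p) \<le> mu * ((p - s) \<bullet> (p' - p))"
    and vi_p'_p: "F p' \<bullet> (p - p') \<le> mu * ((p' - s') \<bullet> (p - p'))"
    and vi_p'_s: "F p' \<bullet> (s - p') \<le> mu * ((p' - s') \<bullet> (s - p'))"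
    and mu: "mu > 0"
  shows "(norm (p - s))\<^sup>2 \<le> (norm (s - s'))\<^sup>2 + 2 / mu * (norm (F p') * norm (p' - s))"
proof -
  define a b e where "a = p - s" and "b = p' - s" and "e = s - s'"
  have "mu * ((a - (b + e)) \<bullet> (a - b)) = - (mu * ((p - s) \<bullet> (p' - p)) + mu * ((p' - s') \<bullet> (p - p')))"
    by (simp add: a_def b_def e_def inner_diff_left inner_diff_right algebra_simps)
  also have "\<dots> \<le> (F p - F p') \<bullet> (p - p')"
    using vi_p vi_p'_p by (simp add: inner_diff_left inner_diff_right algebra_simps)
  finally have "mu * ((a - (b + e)) \<bullet> (a - b)) \<le> 0"
    using mono by linarith
  then have "(a - (b + e)) \<bullet> (a - b) \<le> 0"
    using mu by (simp add: mult_le_0_iff)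
  \<comment> \<open>add the nonnegative square of \<open>e + 2b - a\<close> to twice this inequality\<close>
  moreover have "0 \<le> (e + 2 *\<^sub>R b - a) \<bullet> (e + 2 *\<^sub>R b - a)"
    by simp
  ultimately have "(norm a)\<^sup>2 \<le> (norm e)\<^sup>2 + 2 * ((b + e) \<bullet> b)"
    unfolding power2_norm_eq_inner
    by (simp add: inner_add_left inner_add_right inner_diff_left inner_diff_right inner_commute algebra_simps)
  moreover have "(b + e) \<bullet> b \<le> norm (F p') * norm b / mu"
  proof -
    have "mu * ((b + e) \<bullet> b) = - (mu * ((p' - s') \<bullet> (s - p')))"
      by (simp add: b_def e_def inner_diff_left inner_diff_right algebra_simps)
    also have "\<dots> \<le> F p' \<bullet> b"
      using vi_p'_s by (simp add: b_def inner_diff_right)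
    also have "\<dots> \<le> norm (F p') * norm b"
      by (rule norm_cauchy_schwarz)
    finally show ?thesis
      using mu by (simp add: pos_le_divide_eq mult.commute)
  qed
  ultimately show ?thesis
    by (simp add: a_def b_def e_def)
qed

lemma block_idem: "block owner i (block owner i a) = block owner i a"
  by (simp add: block_def vec_eq_iff)

lemma block_diff: "block owner i (a - b) = block owner i a - block owner i b"
  by (simp add: block_def vec_eq_iff)

lemma inner_block: "block owner i a \<bullet> b = a \<bullet> block owner i b"
  by (auto simp: block_def inner_vec_def intro!: sum.cong)

lemma inner_block_block: "block owner i a \<bullet> block owner i b = a \<bullet> block owner i b"
  by (metis inner_block block_idem)

lemma sum_inner_blocks:
  fixes owner :: "'c::finite \<Rightarrow> 'p::finite"
  shows "(\<Sum>i\<in>UNIV. block owner i a \<bullet> block owner i b) = a \<bullet> b"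
proof -
  have "(\<Sum>i\<in>UNIV. block owner i a \<bullet> block owner i b)
      = (\<Sum>i\<in>UNIV. \<Sum>c\<in>UNIV. if owner c = i then a $ c * b $ c else 0)"
    by (auto simp: block_def inner_vec_def intro!: sum.cong)
  also have "\<dots> = (\<Sum>c\<in>UNIV. \<Sum>i\<in>UNIV. if owner c = i then a $ c * b $ c else 0)"
    by (rule sum.swap)
  also have "\<dots> = a \<bullet> b"
    by (simp add: inner_vec_def)
  finally show ?thesis .
qed

definition joint_grad ::
  "('c::finite \<Rightarrow> 'p) \<Rightarrow> ('p \<Rightarrow> real^'c \<Rightarrow> real^'c) \<Rightarrow> real^'c \<Rightarrow> real^'c" where
  "joint_grad owner gv q = (\<chi> c. gv (owner c) q $ c)"

lemma block_joint_grad: "block owner i (joint_grad owner gv q) = block owner i (gv i q)"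
  by (simp add: block_def joint_grad_def vec_eq_iff)

lemma norm_joint_grad:
  fixes owner :: "'c::finite \<Rightarrow> 'p::finite"
  shows "norm (joint_grad owner gv q) = sqrt (\<Sum>i\<in>UNIV. (norm (block owner i (gv i q)))\<^sup>2)"
  using sum_inner_blocks[of owner "joint_grad owner gv q" "joint_grad owner gv q"]
  by (simp add: norm_eq_sqrt_inner power2_norm_eq_inner block_joint_grad)

lemma inner_joint_grad_diff:
  fixes owner :: "'c::finite \<Rightarrow> 'p::finite"
  shows "(joint_grad owner gv q - joint_grad owner gv q') \<bullet> (q - q')
       = (\<Sum>i\<in>UNIV. (block owner i (gv i q) - block owner i (gv i q'))
                      \<bullet> (block owner i q - block owner i q'))"
proof -
  have "(joint_grad owner gv q - joint_grad owner gv q') \<bullet> (q - q')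
      = (\<Sum>i\<in>UNIV. block owner i (joint_grad owner gv q - joint_grad owner gv q') \<bullet> block owner i (q - q'))"
    by (rule sum_inner_blocks[symmetric])
  then show ?thesis
    by (simp add: block_diff block_joint_grad)
qed

lemma Gsq_has_derivative:
  "((\<lambda>x. Gsq x s) has_derivative (\<lambda>h. (x - s) \<bullet> h)) (at x within S)"
  unfolding Gsq_def power2_norm_eq_inner
  by (auto intro!: derivative_eq_intros simp: inner_commute algebra_simps)

lemma perturbed_eq_player_first_order:
  assumes eq: "perturbed_eq owner Xs v mu sg p"
    and v_diff: "(v i has_derivative (\<lambda>h. g \<bullet> h)) (at p)"
    and "convex (Xs i)" and y: "y \<in> Xs i"
  shows "g \<bullet> (y - block owner i p) \<le> mu * ((block owner i p - block owner i sg) \<bullet> (y - block owner i p))"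
proof -
  define f where "f x = v i (upd_block owner i p x) - mu * Gsq x (block owner i sg)" for x
  have upd_p: "upd_block owner i p (block owner i p) = p"
    by (simp add: upd_block_def)
  have p_i: "block owner i p \<in> Xs i"
    using eq by (simp add: perturbed_eq_def prod_set_def)
  have max: "f z \<le> f (block owner i p)" if "z \<in> Xs i" for z
    using eq that by (simp add: perturbed_eq_def f_def upd_p)
  have "(upd_block owner i p has_derivative (\<lambda>h. h)) (at (block owner i p) within Xs i)"
    unfolding upd_block_def by (auto intro!: derivative_eq_intros)
  then have "((\<lambda>x. v i (upd_block owner i p x)) has_derivative (\<lambda>h. g \<bullet> h))
      (at (block owner i p) within Xs i)"
    using has_derivative_compose v_diff upd_p by fastforce
  then have "(f has_derivative (\<lambda>h. g \<bullet> h - mu * ((block owner i p - block owner i sg) \<bullet> h)))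
      (at (block owner i p) within Xs i)"
    unfolding f_def by (auto intro!: derivative_eq_intros Gsq_has_derivative)
  from has_derivative_max_on_convex[OF \<open>convex (Xs i)\<close> p_i y this max]
  show ?thesis
    by simp
qed

lemma perturbed_eq_variational_inequality:
  fixes owner :: "'c::finite \<Rightarrow> 'p::finite"
  assumes eq: "perturbed_eq owner Xs v mu sg p"
    and v_diff: "\<And>i. (v i has_derivative (\<lambda>h. gv i p \<bullet> h)) (at p)"
    and convex: "\<And>i. convex (Xs i)" and y: "y \<in> prod_set owner Xs"
  shows "joint_grad owner gv p \<bullet> (y - p) \<le> mu * ((p - sg) \<bullet> (y - p))"
proof -
  have "joint_grad owner gv p \<bullet> (y - p)
      = (\<Sum>i\<in>UNIV. block owner i (joint_grad owner gv p) \<bullet> block owner i (y - p))"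
    by (rule sum_inner_blocks[symmetric])
  also have "\<dots> = (\<Sum>i\<in>UNIV. gv i p \<bullet> (block owner i y - block owner i p))"
    by (simp add: block_joint_grad inner_block_block flip: block_diff)
  also have "\<dots> \<le> (\<Sum>i\<in>UNIV. mu * ((block owner i p - block owner i sg) \<bullet> (block owner i y - block owner i p)))"
    using y by (intro sum_mono perturbed_eq_player_first_order[OF eq v_diff convex])
      (simp add: prod_set_def)
  also have "\<dots> = mu * ((p - sg) \<bullet> (y - p))"
    by (simp add: sum_inner_blocks flip: sum_distrib_left block_diff)
  finally show ?thesis .
qed

theorem lemma14:
  fixes owner :: "'c::finite \<Rightarrow> 'p::finite"
    and Xs :: "'p \<Rightarrow> (real^'c) set"
    and v :: "'p \<Rightarrow> real^'c \<Rightarrow> real"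
    and gv :: "'p \<Rightarrow> real^'c \<Rightarrow> real^'c"
    and mu zeta :: real
    and sg sg' p p' :: "real^'c"
  assumes Xs_sub: "\<And>i. Xs i \<subseteq> block_space owner i"
    and Xs_ne: "\<And>i. Xs i \<noteq> {}"
    and Xs_compact: "\<And>i. compact (Xs i)"
    and Xs_convex: "\<And>i. convex (Xs i)"
    and v_diff: "\<And>i q. q \<in> prod_set owner Xs \<Longrightarrow>
                    (v i has_derivative (\<lambda>h. gv i q \<bullet> h)) (at q)"
    and monotone: "\<And>q q'. q \<in> prod_set owner Xs \<Longrightarrow> q' \<in> prod_set owner Xs \<Longrightarrow>
          (\<Sum>i\<in>UNIV. (block owner i (gv i q) - block owner i (gv i q'))
                        \<bullet> (block owner i q - block owner i q')) \<le> 0"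
    and mu_pos: "mu > 0"
    and grad_bound: "\<And>q. q \<in> prod_set owner Xs \<Longrightarrow>
          sqrt (\<Sum>i\<in>UNIV. (norm (block owner i (gv i q)))^2) \<le> zeta"
    and sg: "sg \<in> prod_set owner Xs"
    and sg': "sg' \<in> prod_set owner Xs"
    and p: "perturbed_eq owner Xs v mu sg p"
    and p': "perturbed_eq owner Xs v mu sg' p'"
  shows "(norm (p - sg))^2 \<le> (norm (sg - sg'))^2 + (2 * zeta / mu) * norm (p' - sg)"
  \<comment> \<open>compactness and nonemptiness of the strategy sets only matter for existence of equilibria\<close>
proof -
  let ?F = "joint_grad owner gv"
  have in_prod: "q \<in> prod_set owner Xs" if "perturbed_eq owner Xs v mu s q" for q s
    using that by (simp add: perturbed_eq_def)
  have vi: "?F q \<bullet> (y - q) \<le> mu * ((q - s) \<bullet> (y - q))"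
    if "perturbed_eq owner Xs v mu s q" and "y \<in> prod_set owner Xs" for q s y
    using that(1) v_diff[OF in_prod[OF that(1)]] Xs_convex that(2)
    by (rule perturbed_eq_variational_inequality)
  have mono: "(?F p - ?F p') \<bullet> (p - p') \<le> 0"
    unfolding inner_joint_grad_diff using monotone in_prod p p' by blast
  have "(norm (p - sg))\<^sup>2 \<le> (norm (sg - sg'))\<^sup>2 + 2 / mu * (norm (?F p') * norm (p' - sg))"
    using mono vi[OF p in_prod[OF p']] vi[OF p' in_prod[OF p]] vi[OF p' sg] mu_pos
    by (rule perturbed_vi_distance_bound)
  also have "\<dots> \<le> (norm (sg - sg'))\<^sup>2 + 2 / mu * (zeta * norm (p' - sg))"
    using grad_bound[OF in_prod[OF p']] mu_pos
    by (intro add_left_mono mult_left_mono mult_right_mono) (simp_all add: norm_joint_grad)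
  finally show ?thesis
    by simp
qed

end
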